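(* Let $\phi\in(0,1)$, $\alpha_\infty,K_0,\eta,\rho_f,\Lambda>0$, $\nu:=\eta/\rho_f$, $F:=\alpha_\infty/\phi$, $C_2:=FK_0/\nu$, $C_1:=4C_2FK_0/\Lambda^2$, $\xi_p:=\frac{C_1+\sqrt{C_1^2+4C_2^2}}{2}$, $a:=\frac{\eta\phi}{\rho_fK_0}$. Let $K^D(\omega)=K_0/(\sqrt{1-iC_1\omega}-iC_2\omega)$ (principal root) and $T^D(\omega):=\frac{i\eta\phi}{\omega\rho_f}K^D(\omega)^{-1}$, and let $\sigma^D$ be the positive measure on $[0,\xi_p]$ with $T^D(\omega)=a\,i/\omega+\int_0^{\xi_p}d\sigma^D(t)/(1-i\omega t)$ for real $\omega\neq0$. Then, with $s=-i\omega$, $$D^D(s):=T^D(\omega)-\frac{ia}{\omega}=\alpha_\infty+\frac{\alpha_\infty(\sqrt{1+C_1s}-1)}{C_2s}=\int_0^{\xi_p}\frac{d\sigma^D(t)}{1+st},$$ and the moments $\mu_k(d\sigma^D):=\int t^k d\sigma^D(t)$ are $$\mu_0(d\sigma^D)=\alpha_\infty+\frac{2K_0\alpha_\infty^2}{\phi\Lambda^2},\qquad \mu_k(d\sigma^D)=\frac{C_1^{k+1}\alpha_\infty}{(k+1)!\,2^{k+1}C_2}\prod_{j=1}^k(2j-1)\quad(k\ge1).$$ Consequently, with $d\lambda^D(u):=u\,dG(u)$ where $dG=\chi_{[0,C_1]}(u)\frac{\psi(u)}{u}du+\frac{r}{\xi_p}\delta_{\xi_p}$ is the JKD probability measure (so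 that $K^D(\omega)=\frac{\nu}{F}\int_0^{\xi_p}\frac{d\lambda^D(u)}{1-i\omega u}$) and $\mu_k(d\lambda^D):=\int u^kd\lambda^D(u)$, $$\Lambda=\sqrt{\frac{2K_0\alpha_\infty^2}{\phi\,[\mu_0(d\sigma^D)-\alpha_\infty]}}=\sqrt{\frac{2K_0\alpha_\infty}{\phi\left[\frac{\mu_1(d\lambda^D)}{\mu_0(d\lambda^D)^2}-1\right]}}.$$
   Context: $\psi(u)=\frac{C_2\sqrt{u(C_1-u)}}{\pi[C_2^2+u(C_1-u)]}$ for $u\in[0,C_1]$, $r=\frac{2C_2\sqrt{\xi_p(\xi_p-C_1)}}{2\xi_p-C_1}$; $\chi_{[0,C_1]}$ is the indicator of $[0,C_1]$ and $\delta_{\xi_p}$ the Dirac measure at $\xi_p$. The square root $\sqrt{1+C_1s}$ is the principal branch (branch cut $(-\infty,-1/C_1]$ in $s$). *)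

theory Defs
  imports "HOL-Analysis.Analysis"
begin

definition KD :: "real \<Rightarrow> real \<Rightarrow> real \<Rightarrow> real \<Rightarrow> complex" where
  "KD K0 C1 C2 \<omega> = complex_of_real K0 /
      (csqrt (1 - \<i> * complex_of_real (C1 * \<omega>)) - \<i> * complex_of_real (C2 * \<omega>))"

definition psiJKD :: "real \<Rightarrow> real \<Rightarrow> real \<Rightarrow> real" where
  "psiJKD C1 C2 u = C2 * sqrt (u * (C1 - u)) / (pi * (C2\<^sup>2 + u * (C1 - u)))"

text \<open>k-th moment of d lambda^D(u) = u dG(u) = chi_[0,C1](u) psi(u) du + r delta_{xi_p}.\<close>
definition mu_lambdaD :: "real \<Rightarrow> real \<Rightarrow> real \<Rightarrow> real \<Rightarrow> nat \<Rightarrow> real" where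
  "mu_lambdaD C1 C2 r \<xi>p k =
     (LINT u:{0..C1}|lborel. u ^ k * psiJKD C1 C2 u) + r * \<xi>p ^ k"

end

theory Submission
  imports Defs
begin

text \<open>Because \<sigma> is a finite measure
  supported in [0, \<xi>p], its Stieltjes transform \<integral> d\<sigma>(t) / (1 + s t) expands for |s| < 1/\<xi>p into
  the moment series \<Sum> \<mu>_k (-s)^k, while D(s) expands by the binomial series of \<surd>(1 + C1 s).
  Both series agree on a segment of the imaginary axis, so their coefficients agree, which gives
  every moment of \<sigma>. The first two moments of \<lambda>^D are integrals of \<psi> with elementary
  primitives (arcsin and arctan terms) plus the atom at \<xi>p; both formulas for \<Lambda> then follow
  by algebra.\<close>

lemma stieltjes_transform_moment_sums:
  fixes \<sigma> :: "real measure" and \<xi> :: real and z :: complex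
  assumes sets: "sets \<sigma> = sets borel" and fin: "finite_measure \<sigma>"
    and supp: "AE t in \<sigma>. \<bar>t\<bar> \<le> \<xi>" and z: "norm z * \<xi> < 1"
  shows "(\<lambda>k. complex_of_real (\<integral>t. t ^ k \<partial>\<sigma>) * z ^ k) sums
           (\<integral>t. 1 / (1 - z * complex_of_real t) \<partial>\<sigma>)"
proof -
  interpret finite_measure \<sigma> by fact
  have meas: "f \<in> borel_measurable \<sigma>" if "f \<in> borel_measurable borel" for f :: "real \<Rightarrow> 'b::real_normed_vector"
    using that measurable_cong_sets[OF sets refl] by blast
  define s where "s n t = (\<Sum>k<n. (z * complex_of_real t) ^ k)" for n t
  have bound: "norm (z * complex_of_real t) \<le> norm z * \<xi>" if "\<bar>t\<bar> \<le> \<xi>" for t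
    using that by (simp add: norm_mult mult_left_mono)
  have int_power: "integrable \<sigma> (\<lambda>t. t ^ k)" for k
  proof (rule integrable_const_bound[where B="\<xi> ^ k"])
    show "AE t in \<sigma>. norm (t ^ k) \<le> \<xi> ^ k"
      using supp by eventually_elim (metis abs_ge_zero power_abs power_mono real_norm_def)
  qed (rule meas, measurable)
  have "(\<lambda>n. integral\<^sup>L \<sigma> (s n)) \<longlonglongrightarrow> (\<integral>t. 1 / (1 - z * complex_of_real t) \<partial>\<sigma>)"
  proof (rule integral_dominated_convergence[where w="\<lambda>_. 1 / (1 - norm z * \<xi>)"])
    show "AE t in \<sigma>. (\<lambda>n. s n t) \<longlonglongrightarrow> 1 / (1 - z * complex_of_real t)"
      using supp
    proof eventually_elim
      case (elim t)
      then have "norm (z * complex_of_real t) < 1" using bound z by fastforce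
      then show ?case unfolding s_def sums_def[symmetric] by (rule geometric_sums)
    qed
    show "AE t in \<sigma>. norm (s n t) \<le> 1 / (1 - norm z * \<xi>)" for n
      using supp
    proof eventually_elim
      case (elim t)
      have nonneg: "0 \<le> norm z * \<xi>" using elim abs_ge_zero[of t] by (simp del: abs_ge_zero)
      have "norm (s n t) \<le> (\<Sum>k<n. (norm z * \<xi>) ^ k)"
        unfolding s_def using bound[OF elim]
        by (intro order_trans[OF norm_sum sum_mono]) (simp add: norm_power power_mono)
      also have "\<dots> \<le> (\<Sum>k. (norm z * \<xi>) ^ k)"
        using nonneg z by (intro sum_le_suminf summable_geometric) auto
      also have "\<dots> = 1 / (1 - norm z * \<xi>)"
        using nonneg z by (simp add: suminf_geometric)
      finally show ?case .
    qed
    show "(\<lambda>t. 1 / (1 - z * complex_of_real t)) \<in> borel_measurable \<sigma>"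
      by (rule meas) measurable
    show "s n \<in> borel_measurable \<sigma>" for n
      unfolding s_def by (rule meas) measurable
  qed simp
  moreover have "integral\<^sup>L \<sigma> (s n) = (\<Sum>k<n. complex_of_real (\<integral>t. t ^ k \<partial>\<sigma>) * z ^ k)" for n
  proof -
    have "s n = (\<lambda>t. \<Sum>k<n. z ^ k * complex_of_real (t ^ k))"
      unfolding s_def by (auto simp: power_mult_distrib)
    moreover have "integrable \<sigma> (\<lambda>t. z ^ k * complex_of_real (t ^ k))" for k
      by (intro integrable_mult_right integrable_of_real int_power)
    ultimately have "integral\<^sup>L \<sigma> (s n) = (\<Sum>k<n. z ^ k * (CLINT t|\<sigma>. complex_of_real (t ^ k)))"
      by (simp add: integral_sum del: of_real_power)
    then show ?thesis by (simp only: integral_complex_of_real mult.commute)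
  qed
  ultimately show ?thesis unfolding sums_def by simp
qed

lemma powser_vanishing_on_interval_imp_zero:
  fixes c :: "nat \<Rightarrow> 'a::{real_normed_field,banach}"
  assumes "0 < \<epsilon>" and vanish: "\<And>x. 0 < x \<Longrightarrow> x < \<epsilon> \<Longrightarrow> (\<lambda>n. c n * of_real x ^ n) sums 0"
  shows "c k = 0"
proof (induction k rule: less_induct)
  case (less k)
  define g where "g z = (\<Sum>n. c (n + k) * z ^ n)" for z :: 'a
  have shifted: "(\<lambda>n. c (n + k) * of_real x ^ n) sums 0" if x: "0 < x" "x < \<epsilon>" for x
  proof -
    have "(\<lambda>n. c (n + k) * of_real x ^ (n + k)) sums 0"
      using sums_zero_iff_shift[of k "\<lambda>n. c n * of_real x ^ n" 0] vanish[OF x] less by simp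
    then have "(\<lambda>n. c (n + k) * of_real x ^ (n + k) / of_real x ^ k) sums (0 / of_real x ^ k)"
      by (rule sums_divide)
    then show ?thesis using x by (simp add: power_add)
  qed
  have "isCont g 0"
    unfolding g_def using shifted[of "\<epsilon>/2"] \<open>0 < \<epsilon>\<close>
    by (intro isCont_powser[of _ "of_real (\<epsilon>/2)"]) (auto simp: sums_iff)
  then have "((\<lambda>x. g (of_real x)) \<longlongrightarrow> g 0) (at_right 0)"
    by (rule isCont_tendsto_compose) (auto intro!: tendsto_eq_intros tendsto_ident_at)
  moreover have "\<forall>\<^sub>F x in at_right 0. g (of_real x) = 0"
    using eventually_at_right_real[OF \<open>0 < \<epsilon>\<close>]
    by eventually_elim (use shifted in \<open>auto simp: g_def sums_iff\<close>)
  then have "((\<lambda>x. g (of_real x)) \<longlongrightarrow> 0) (at_right (0::real))"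
    by (rule tendsto_eventually)
  ultimately have "g 0 = 0" by (rule tendsto_unique[rotated]) simp
  then show ?case by (simp add: g_def)
qed

lemma gbinomial_half_Suc:
  "((1/2 :: 'a::field_char_0) gchoose Suc n) * (-1) ^ n
     = (\<Prod>j=1..n. 2 * of_nat j - 1) / (fact (Suc n) * 2 ^ Suc n)"
proof -
  have prod: "(\<Prod>i=0..n. 1/2 - of_nat i :: 'a) * (-1) ^ n = (\<Prod>j=1..n. 2 * of_nat j - 1) / 2 ^ Suc n"
  proof (induction n)
    case (Suc n)
    then show ?case
      by (simp add: prod.atLeast0_atMost_Suc prod.nat_ivl_Suc' field_simps)
  qed simp
  have "((1/2 :: 'a) gchoose Suc n) * (-1) ^ n = ((\<Prod>i=0..n. 1/2 - of_nat i) * (-1) ^ n) / fact (Suc n)"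
    by (simp add: gbinomial_Suc)
  also have "\<dots> = (\<Prod>j=1..n. 2 * of_nat j - 1) / 2 ^ Suc n / fact (Suc n)"
    unfolding prod ..
  finally show ?thesis
    by (simp add: mult.commute)
qed

lemma sqrt_difference_quotient_sums:
  fixes \<alpha> C1 C2 :: real and s :: complex
  assumes "s \<noteq> 0" and "norm (of_real C1 * s) < 1"
  shows "(\<lambda>n. (of_real (if n = 0 then \<alpha> else 0)
                + of_real (\<alpha> * C1 ^ Suc n / C2) * ((1/2) gchoose Suc n)) * s ^ n)
         sums (of_real \<alpha> + of_real \<alpha> * (csqrt (1 + of_real C1 * s) - 1) / (of_real C2 * s))"
proof -
  from gen_binomial_complex[OF assms(2), of "1/2"]
  have "(\<lambda>n. ((1/2) gchoose n) * (of_real C1 * s) ^ n) sums csqrt (1 + of_real C1 * s)"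
    by (simp add: csqrt_conv_powr)
  then have "(\<lambda>n. ((1/2) gchoose Suc n) * (of_real C1 * s) ^ Suc n) sums (csqrt (1 + of_real C1 * s) - 1)"
    by (subst sums_Suc_iff) simp
  then have "(\<lambda>n. ((1/2) gchoose Suc n) * (of_real C1 * s) ^ Suc n * (of_real \<alpha> / (of_real C2 * s)))
      sums ((csqrt (1 + of_real C1 * s) - 1) * (of_real \<alpha> / (of_real C2 * s)))"
    by (rule sums_mult2)
  then have "(\<lambda>n. of_real (\<alpha> * C1 ^ Suc n / C2) * ((1/2) gchoose Suc n) * s ^ n)
      sums (of_real \<alpha> * (csqrt (1 + of_real C1 * s) - 1) / (of_real C2 * s))"
    using \<open>s \<noteq> 0\<close> by (simp add: power_mult_distrib field_simps)
  from sums_add[OF sums_single[of 0 "\<lambda>n. of_real \<alpha> * s ^ n", unfolded power_0 mult_1_right] this] show ?thesis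
    by (rule sums_cong[THEN iffD1, rotated]) (simp add: distrib_right)
qed

lemma moments_of_sqrt_stieltjes_transform:
  fixes \<sigma> :: "real measure" and \<alpha> C1 C2 \<xi> :: real
  assumes sets: "sets \<sigma> = sets borel" and fin: "finite_measure \<sigma>"
    and supp: "AE t in \<sigma>. \<bar>t\<bar> \<le> \<xi>" and "0 < \<xi>" and "\<bar>C1\<bar> \<le> \<xi>"
    and transform: "\<And>x. 0 < x \<Longrightarrow> x < 1 / \<xi> \<Longrightarrow>
           (\<integral>t. 1 / (1 + (- \<i> * of_real x) * of_real t) \<partial>\<sigma>)
             = of_real \<alpha> + of_real \<alpha> * (csqrt (1 + of_real C1 * (- \<i> * of_real x)) - 1)
                                       / (of_real C2 * (- \<i> * of_real x))"
  shows "(\<integral>t. t ^ k \<partial>\<sigma>) = (if k = 0 then \<alpha> else 0)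
           + C1 ^ (k + 1) * \<alpha> / (fact (k + 1) * 2 ^ (k + 1) * C2) * (\<Prod>j=1..k. 2 * real j - 1)"
proof -
  define \<mu> where "\<mu> n = complex_of_real (\<integral>t. t ^ n \<partial>\<sigma>)" for n
  define c where "c n = of_real (if n = 0 then \<alpha> else 0)
                        + of_real (\<alpha> * C1 ^ Suc n / C2) * ((1/2 :: complex) gchoose Suc n)" for n
  have "\<mu> n * \<i> ^ n - c n * (- \<i>) ^ n = 0" for n
  proof (rule powser_vanishing_on_interval_imp_zero)
    show "0 < 1 / \<xi>" using \<open>0 < \<xi>\<close> by simp
    fix x :: real assume x: "0 < x" "x < 1 / \<xi>"
    then have "x * \<xi> < 1" using \<open>0 < \<xi>\<close> by (simp add: field_simps)
    then have moments: "(\<lambda>n. \<mu> n * (\<i> * of_real x) ^ n) sums (\<integral>t. 1 / (1 - \<i> * of_real x * of_real t) \<partial>\<sigma>)"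
      unfolding \<mu>_def using x by (intro stieltjes_transform_moment_sums[OF sets fin supp]) (simp add: norm_mult)
    have "norm (of_real C1 * (- \<i> * complex_of_real x)) < 1"
    proof -
      have "\<bar>C1\<bar> * x \<le> \<xi> * x" using \<open>\<bar>C1\<bar> \<le> \<xi>\<close> x by (simp add: mult_right_mono)
      moreover have "norm (of_real C1 * (- \<i> * complex_of_real x)) = \<bar>C1\<bar> * x"
        using x by (simp add: norm_mult)
      ultimately show ?thesis using \<open>x * \<xi> < 1\<close> by (simp add: mult.commute)
    qed
    then have closed_form: "(\<lambda>n. c n * (- \<i> * of_real x) ^ n) sums
        (of_real \<alpha> + of_real \<alpha> * (csqrt (1 + of_real C1 * (- \<i> * of_real x)) - 1)
                                  / (of_real C2 * (- \<i> * of_real x)))"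
      unfolding c_def using sqrt_difference_quotient_sums[of "- \<i> * of_real x" C1 \<alpha> C2] x by simp
    have "(\<integral>t. 1 / (1 - \<i> * of_real x * of_real t) \<partial>\<sigma>) = (\<integral>t. 1 / (1 + (- \<i> * of_real x) * of_real t) \<partial>\<sigma>)"
      by (simp add: mult.assoc)
    with sums_diff[OF moments closed_form] transform[OF x]
    have "(\<lambda>n. \<mu> n * (\<i> * of_real x) ^ n - c n * (- \<i> * of_real x) ^ n) sums 0"
      by (simp only: diff_self)
    then show "(\<lambda>n. (\<mu> n * \<i> ^ n - c n * (- \<i>) ^ n) * of_real x ^ n) sums 0"
      by (simp only: power_mult_distrib left_diff_distrib mult.assoc)
  qed
  then have "\<mu> k * \<i> ^ k * (- \<i>) ^ k = c k * (- \<i>) ^ k * (- \<i>) ^ k"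
    by simp
  then have "\<mu> k = c k * (-1) ^ k"
    by (simp add: mult.assoc flip: power_mult_distrib)
  also have "\<dots> = of_real (if k = 0 then \<alpha> else 0)
                   + of_real (\<alpha> * C1 ^ Suc k / C2) * (((1/2) gchoose Suc k) * (-1) ^ k)"
    by (simp add: c_def distrib_right mult.assoc)
  also have "\<dots> = of_real ((if k = 0 then \<alpha> else 0)
           + C1 ^ (k + 1) * \<alpha> / (fact (k + 1) * 2 ^ (k + 1) * C2) * (\<Prod>j=1..k. 2 * real j - 1))"
    unfolding gbinomial_half_Suc by (simp add: field_simps)
  finally show ?thesis
    unfolding \<mu>_def of_real_eq_iff .
qed

lemma arcsin_ratio_has_real_derivative:
  fixes R c x :: real
  assumes "0 < R" and "\<bar>x\<bar> < R"
  shows "((\<lambda>x. arcsin (c * x / (R * sqrt (c\<^sup>2 + R\<^sup>2 - x\<^sup>2)))) has_real_derivative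
           c * sqrt (c\<^sup>2 + R\<^sup>2) / ((c\<^sup>2 + R\<^sup>2 - x\<^sup>2) * sqrt (R\<^sup>2 - x\<^sup>2))) (at x)"
proof -
  define p where "p = sqrt (c\<^sup>2 + R\<^sup>2 - x\<^sup>2)"
  define q where "q = sqrt (R\<^sup>2 - x\<^sup>2)"
  define S where "S = sqrt (c\<^sup>2 + R\<^sup>2)"
  have x2: "x\<^sup>2 < R\<^sup>2"
    using abs_le_square_iff[of R x] assms by auto
  moreover have x2c: "x\<^sup>2 < c\<^sup>2 + R\<^sup>2"
    using x2 zero_le_power2[of c] by linarith
  ultimately have q: "0 < q" "q\<^sup>2 = R\<^sup>2 - x\<^sup>2" and p: "0 < p" "p\<^sup>2 = c\<^sup>2 + R\<^sup>2 - x\<^sup>2"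
    and S: "0 < S" "S\<^sup>2 = c\<^sup>2 + R\<^sup>2"
    unfolding p_def q_def S_def using assms by (auto intro: add_nonneg_pos)
  have key: "(R * p)\<^sup>2 - (c * x)\<^sup>2 = (S * q)\<^sup>2"
    unfolding power_mult_distrib p q S by (simp add: algebra_simps)
  have inner: "((\<lambda>x. c * x / (R * sqrt (c\<^sup>2 + R\<^sup>2 - x\<^sup>2))) has_real_derivative c * S\<^sup>2 / (R * p ^ 3)) (at x)"
  proof -
    have "((\<lambda>x. c * x / (R * sqrt (c\<^sup>2 + R\<^sup>2 - x\<^sup>2))) has_real_derivative
            (c * (R * p) - c * x * (R * (inverse p / 2 * (- (2 * x))))) / (R * p)\<^sup>2) (at x)"
      using x2c assms(1) by (auto intro!: derivative_eq_intros simp: p_def power2_eq_square mult_ac)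
    moreover have "c * (R * p) - c * x * (R * (inverse p / 2 * (- (2 * x)))) = c * R * (p\<^sup>2 + x\<^sup>2) / p"
      using p(1) by (simp add: field_simps power2_eq_square)
    moreover have "p\<^sup>2 + x\<^sup>2 = S\<^sup>2"
      using p S by simp
    moreover have "c * R * S\<^sup>2 / p / (R * p)\<^sup>2 = c * S\<^sup>2 / (R * p ^ 3)"
      using p assms(1) by (simp add: field_simps power2_eq_square power3_eq_cube)
    ultimately show ?thesis by simp
  qed
  have "0 < (S * q)\<^sup>2"
    using S q by simp
  then have "\<bar>c * x\<bar> < \<bar>R * p\<bar>"
    using key abs_le_square_iff[of "R * p" "c * x"] by linarith
  then have "\<bar>c * x / (R * p)\<bar> < 1"
    using p assms(1) by (simp add: abs_divide)
  then have bounds: "-1 < c * x / (R * p)" "c * x / (R * p) < 1"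
    unfolding abs_less_iff by auto
  have root: "sqrt (1 - (c * x / (R * p))\<^sup>2) = S * q / (R * p)"
  proof -
    have "1 - (c * x / (R * p))\<^sup>2 = ((R * p)\<^sup>2 - (c * x)\<^sup>2) / (R * p)\<^sup>2"
      using p(1) assms(1) by (simp add: power_divide field_simps)
    also have "\<dots> = (S * q / (R * p))\<^sup>2"
      unfolding key by (simp add: power_divide)
    finally have "1 - (c * x / (R * p))\<^sup>2 = (S * q / (R * p))\<^sup>2" .
    then show ?thesis
      using q p S assms(1) by simp
  qed
  have "((\<lambda>x. arcsin (c * x / (R * sqrt (c\<^sup>2 + R\<^sup>2 - x\<^sup>2)))) has_real_derivative
           inverse (S * q / (R * p)) * (c * S\<^sup>2 / (R * p ^ 3))) (at x)"
    using DERIV_chain2[OF DERIV_arcsin inner, folded p_def, OF bounds] unfolding root .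
  moreover have "inverse (S * q / (R * p)) * (c * S\<^sup>2 / (R * p ^ 3)) = c * S / (p\<^sup>2 * q)"
    using q(1) p(1) S(1) assms(1) by (simp add: field_simps power2_eq_square power3_eq_cube)
  ultimately show ?thesis
    unfolding p(2)[symmetric] S_def[symmetric] q_def[symmetric] by simp
qed

lemma abs_arcsin_ratio_le_1:
  fixes R c x :: real
  assumes "0 < R" and "\<bar>x\<bar> \<le> R"
  shows "\<bar>c * x / (R * sqrt (c\<^sup>2 + R\<^sup>2 - x\<^sup>2))\<bar> \<le> 1"
proof -
  have "x\<^sup>2 \<le> R\<^sup>2"
    using abs_le_square_iff[of x R] assms by auto
  then have nonneg: "0 \<le> c\<^sup>2 + R\<^sup>2 - x\<^sup>2"
    using zero_le_power2[of c] by linarith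
  have "(c * x)\<^sup>2 \<le> c\<^sup>2 * R\<^sup>2 + R\<^sup>2 * (R\<^sup>2 - x\<^sup>2)"
    using \<open>x\<^sup>2 \<le> R\<^sup>2\<close> by (simp add: power_mult_distrib mult_left_mono add_increasing2)
  also have "\<dots> = (R * sqrt (c\<^sup>2 + R\<^sup>2 - x\<^sup>2))\<^sup>2"
    using nonneg by (simp add: power_mult_distrib algebra_simps)
  finally have "\<bar>c * x\<bar> \<le> \<bar>R * sqrt (c\<^sup>2 + R\<^sup>2 - x\<^sup>2)\<bar>"
    by (simp only: abs_le_square_iff)
  then show ?thesis
    by (auto simp: abs_divide divide_le_eq_1 simp del: abs_mult)
qed

lemma psi_primitive_has_real_derivative:
  fixes R c x :: real
  assumes "0 < R" and "\<bar>x\<bar> < R"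
  shows "((\<lambda>x. arcsin (x / R) - c / sqrt (c\<^sup>2 + R\<^sup>2) * arcsin (c * x / (R * sqrt (c\<^sup>2 + R\<^sup>2 - x\<^sup>2))))
           has_real_derivative sqrt (R\<^sup>2 - x\<^sup>2) / (c\<^sup>2 + R\<^sup>2 - x\<^sup>2)) (at x)"
proof -
  define q where "q = sqrt (R\<^sup>2 - x\<^sup>2)"
  define S where "S = sqrt (c\<^sup>2 + R\<^sup>2)"
  have x2: "x\<^sup>2 < R\<^sup>2"
    using abs_le_square_iff[of R x] assms by auto
  then have q: "0 < q" "q\<^sup>2 = R\<^sup>2 - x\<^sup>2"
    unfolding q_def by auto
  have S: "0 < S"
    unfolding S_def using assms(1) by (simp add: add_nonneg_pos)
  have "((\<lambda>x. arcsin (x / R)) has_real_derivative 1 / q) (at x)"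
  proof -
    have "sqrt (1 - (x / R)\<^sup>2) = q / R"
      using q assms(1) by (simp add: q_def power_divide field_simps real_sqrt_divide)
    then show ?thesis
      using assms by (auto intro!: derivative_eq_intros simp: abs_less_iff field_simps)
  qed
  from DERIV_diff[OF this DERIV_cmult[OF arcsin_ratio_has_real_derivative[OF assms, of c], of "c / S"]]
  have "((\<lambda>x. arcsin (x / R) - c / S * arcsin (c * x / (R * sqrt (c\<^sup>2 + R\<^sup>2 - x\<^sup>2))))
           has_real_derivative 1 / q - c / S * (c * S / ((c\<^sup>2 + R\<^sup>2 - x\<^sup>2) * q))) (at x)"
    unfolding S_def q_def .
  moreover have "1 / q - c / S * (c * S / ((c\<^sup>2 + R\<^sup>2 - x\<^sup>2) * q)) = q / (c\<^sup>2 + R\<^sup>2 - x\<^sup>2)"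
  proof -
    define D where "D = c\<^sup>2 + R\<^sup>2 - x\<^sup>2"
    have D: "0 < D" "D - c\<^sup>2 = q\<^sup>2"
      unfolding D_def using x2 q(2) zero_le_power2[of c] by linarith+
    have "1 / q - c / S * (c * S / (D * q)) = (D - c\<^sup>2) / (D * q)"
      using q(1) S D(1) by (simp add: field_simps power2_eq_square)
    also have "\<dots> = q / D"
      using q(1) unfolding D(2) by (simp add: power2_eq_square)
    finally show ?thesis
      unfolding D_def .
  qed
  ultimately show ?thesis
    unfolding q_def S_def by simp
qed

lemma psi_centered_primitive_has_real_derivative:
  fixes R c x :: real
  assumes "c \<noteq> 0" and "\<bar>x\<bar> < R"
  shows "((\<lambda>x. - sqrt (R\<^sup>2 - x\<^sup>2) + c * arctan (sqrt (R\<^sup>2 - x\<^sup>2) / c))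
           has_real_derivative x * sqrt (R\<^sup>2 - x\<^sup>2) / (c\<^sup>2 + R\<^sup>2 - x\<^sup>2)) (at x)"
proof -
  define q where "q = sqrt (R\<^sup>2 - x\<^sup>2)"
  have x2: "x\<^sup>2 < R\<^sup>2"
    using abs_le_square_iff[of R x] assms by auto
  then have q: "0 < q" "q\<^sup>2 = R\<^sup>2 - x\<^sup>2"
    unfolding q_def by auto
  have "((\<lambda>x. sqrt (R\<^sup>2 - x\<^sup>2)) has_real_derivative - x / q) (at x)"
    using x2 q(1) by (auto intro!: derivative_eq_intros simp: q_def[symmetric] field_simps)
  from DERIV_add[OF DERIV_minus[OF this] DERIV_cmult[OF DERIV_chain2[OF DERIV_arctan DERIV_cdivide[OF this]]]]
  have "((\<lambda>x. - sqrt (R\<^sup>2 - x\<^sup>2) + c * arctan (sqrt (R\<^sup>2 - x\<^sup>2) / c)) has_real_derivative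
          - (- x / q) + c * (inverse (1 + (q / c)\<^sup>2) * (- x / q / c))) (at x)"
    unfolding q_def .
  moreover have "- (- x / q) + c * (inverse (1 + (q / c)\<^sup>2) * (- x / q / c)) = x * q / (c\<^sup>2 + R\<^sup>2 - x\<^sup>2)"
  proof -
    define D where "D = c\<^sup>2 + R\<^sup>2 - x\<^sup>2"
    have D: "0 < D" "D - c\<^sup>2 = q\<^sup>2"
      unfolding D_def using x2 q(2) zero_le_power2[of c] by linarith+
    have "inverse (1 + (q / c)\<^sup>2) = c\<^sup>2 / D"
      using assms(1) D by (simp add: field_simps power_divide)
    then have "- (- x / q) + c * (inverse (1 + (q / c)\<^sup>2) * (- x / q / c)) = x * (D - c\<^sup>2) / (q * D)"
      using assms(1) D(1) q(1) by (simp add: field_simps)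
    also have "\<dots> = x * q / D"
      using q(1) unfolding D(2) by (simp add: power2_eq_square)
    finally show ?thesis
      unfolding D_def .
  qed
  ultimately show ?thesis
    unfolding q_def using x2 by simp
qed

lemma lborel_set_integral_Icc_FTC_interior:
  fixes f F :: "real \<Rightarrow> real"
  assumes "a \<le> b" and "continuous_on {a..b} f" and "continuous_on {a..b} F"
    and "\<And>x. x \<in> {a<..<b} \<Longrightarrow> (F has_real_derivative f x) (at x)"
  shows "(LINT x:{a..b}|lborel. f x) = F b - F a"
proof -
  have "set_integrable lborel {a..b} f"
    unfolding set_integrable_def using assms(2) by (intro borel_integrable_compact) auto
  moreover have "(f has_integral (F b - F a)) {a..b}"
    using assms by (intro fundamental_theorem_of_calculus_interior)
      (auto simp: has_real_derivative_iff_has_vector_derivative)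
  ultimately show ?thesis
    using set_borel_integral_eq_integral(2) by (metis integral_unique)
qed

lemma psiJKD_integrals:
  fixes C1 C2 :: real
  assumes "0 < C1" and "0 < C2"
  defines "S \<equiv> sqrt (C2\<^sup>2 + (C1 / 2)\<^sup>2)"
  shows "(LINT u:{0..C1}|lborel. psiJKD C1 C2 u) = C2 - C2\<^sup>2 / S"
    and "(LINT u:{0..C1}|lborel. u * psiJKD C1 C2 u) = C1 / 2 * (C2 - C2\<^sup>2 / S)"
proof -
  define R where "R = C1 / 2"
  have R: "0 < R" "C1 = 2 * R" and S: "0 < S" "S = sqrt (C2\<^sup>2 + R\<^sup>2)"
    using assms by (auto simp: R_def S_def add_nonneg_pos)
  define F where "F = (\<lambda>x. arcsin (x / R) - C2 / sqrt (C2\<^sup>2 + R\<^sup>2) * arcsin (C2 * x / (R * sqrt (C2\<^sup>2 + R\<^sup>2 - x\<^sup>2))))"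
  define G where "G = (\<lambda>x. - sqrt (R\<^sup>2 - x\<^sup>2) + C2 * arctan (sqrt (R\<^sup>2 - x\<^sup>2) / C2))"
  define f where "f = (\<lambda>x. sqrt (R\<^sup>2 - x\<^sup>2) / (C2\<^sup>2 + R\<^sup>2 - x\<^sup>2))"
  have psi: "psiJKD C1 C2 u = C2 / pi * f (u - R)" for u
    by (simp add: psiJKD_def f_def R(2) algebra_simps power2_eq_square)
  have centered: "\<bar>u - R\<bar> \<le> R" if "u \<in> {0..C1}" for u
    using that R by auto
  have centered_strict: "\<bar>u - R\<bar> < R" if "u \<in> {0<..<C1}" for u
    using that R by auto
  have shift: "((\<lambda>u. u - R) has_real_derivative 1) (at u)" for u
    by (auto intro!: derivative_eq_intros)
  have dF: "((\<lambda>u. F (u - R)) has_real_derivative f (u - R)) (at u)" if "u \<in> {0<..<C1}" for u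
    using DERIV_chain2[OF _ shift, OF psi_primitive_has_real_derivative[OF R(1) centered_strict[OF that]]]
    unfolding F_def f_def by simp
  have dG: "((\<lambda>u. G (u - R)) has_real_derivative (u - R) * f (u - R)) (at u)" if "u \<in> {0<..<C1}" for u
    using DERIV_chain2[OF _ shift, OF psi_centered_primitive_has_real_derivative[OF _ centered_strict[OF that]]]
      assms(2)
    unfolding G_def f_def by simp
  have denom: "0 < C2\<^sup>2 + R\<^sup>2 - x\<^sup>2" if "\<bar>x\<bar> \<le> R" for x
  proof -
    have "x\<^sup>2 \<le> R\<^sup>2"
      using abs_le_square_iff[of x R] that R(1) by auto
    moreover have "0 < C2\<^sup>2"
      using assms(2) by simp
    ultimately show ?thesis by linarith
  qed
  have cf: "continuous_on {0..C1} (\<lambda>u. f (u - R))"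
    unfolding f_def using denom[OF centered] by (intro continuous_intros) force
  have cF: "continuous_on {0..C1} (\<lambda>u. F (u - R))"
    unfolding F_def
  proof (intro continuous_intros ballI conjI)
    fix u assume "u \<in> {0..C1}"
    note u = centered[OF this]
    then show "-1 \<le> (u - R) / R" "(u - R) / R \<le> 1"
      using R(1) by (auto simp: field_simps abs_le_iff)
    show "-1 \<le> C2 * (u - R) / (R * sqrt (C2\<^sup>2 + R\<^sup>2 - (u - R)\<^sup>2))"
         "C2 * (u - R) / (R * sqrt (C2\<^sup>2 + R\<^sup>2 - (u - R)\<^sup>2)) \<le> 1"
      using abs_arcsin_ratio_le_1[OF R(1) u, of C2] unfolding abs_le_iff by linarith+
    show "R * sqrt (C2\<^sup>2 + R\<^sup>2 - (u - R)\<^sup>2) \<noteq> 0"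
      using denom[OF u] R(1) by simp
  qed (use R in auto)
  have cG: "continuous_on {0..C1} (\<lambda>u. G (u - R))"
    unfolding G_def by (intro continuous_intros) (use assms(2) in auto)
  have F_ends: "F R = pi / 2 - C2 / S * (pi / 2)" "F (- R) = - (pi / 2) + C2 / S * (pi / 2)"
    using R(1) assms(2) by (simp_all add: F_def S(2))
  have G_ends: "G R = 0" "G (- R) = 0"
    by (simp_all add: G_def)
  have "(LINT u:{0..C1}|lborel. psiJKD C1 C2 u) = C2 / pi * F (C1 - R) - C2 / pi * F (0 - R)"
  proof (rule lborel_set_integral_Icc_FTC_interior)
    show "((\<lambda>u. C2 / pi * F (u - R)) has_real_derivative psiJKD C1 C2 u) (at u)" if "u \<in> {0<..<C1}" for u
      unfolding psi by (rule DERIV_cmult[OF dF[OF that]])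
  qed (use assms(1) cf cF in \<open>auto simp: psi intro!: continuous_intros\<close>)
  also have "\<dots> = C2 - C2\<^sup>2 / S"
    using S(1) by (simp add: R(2) F_ends field_simps power2_eq_square)
  finally show "(LINT u:{0..C1}|lborel. psiJKD C1 C2 u) = C2 - C2\<^sup>2 / S" .
  have "(LINT u:{0..C1}|lborel. u * psiJKD C1 C2 u)
      = (R * (C2 / pi) * F (C1 - R) + C2 / pi * G (C1 - R)) - (R * (C2 / pi) * F (0 - R) + C2 / pi * G (0 - R))"
  proof (rule lborel_set_integral_Icc_FTC_interior)
    fix u assume u: "u \<in> {0<..<C1}"
    have "((\<lambda>u. R * (C2 / pi) * F (u - R) + C2 / pi * G (u - R)) has_real_derivative
            R * (C2 / pi) * f (u - R) + C2 / pi * ((u - R) * f (u - R))) (at u)"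
      by (intro DERIV_add DERIV_cmult dF[OF u] dG[OF u])
    then show "((\<lambda>u. R * (C2 / pi) * F (u - R) + C2 / pi * G (u - R)) has_real_derivative u * psiJKD C1 C2 u) (at u)"
      by (simp add: psi algebra_simps)
  qed (use assms(1) cf cF cG in \<open>auto simp: psi intro!: continuous_intros\<close>)
  also have "\<dots> = C1 / 2 * (C2 - C2\<^sup>2 / S)"
    using S(1) by (simp add: R(2) F_ends G_ends field_simps power2_eq_square)
  finally show "(LINT u:{0..C1}|lborel. u * psiJKD C1 C2 u) = C1 / 2 * (C2 - C2\<^sup>2 / S)" .
qed

lemma mu_lambdaD_0_1:
  fixes C1 C2 :: real
  assumes "0 < C1" and "0 < C2"
  defines "\<xi>p \<equiv> (C1 + sqrt (C1\<^sup>2 + 4 * C2\<^sup>2)) / 2"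
  defines "r \<equiv> 2 * C2 * sqrt (\<xi>p * (\<xi>p - C1)) / (2 * \<xi>p - C1)"
  shows "mu_lambdaD C1 C2 r \<xi>p 0 = C2" and "mu_lambdaD C1 C2 r \<xi>p 1 = C1 * C2 / 2 + C2\<^sup>2"
proof -
  define S where "S = sqrt (C2\<^sup>2 + (C1 / 2)\<^sup>2)"
  have S: "0 < S" "S\<^sup>2 = C2\<^sup>2 + (C1 / 2)\<^sup>2"
    using assms(2) by (auto simp: S_def add_pos_nonneg)
  have "sqrt (C1\<^sup>2 + 4 * C2\<^sup>2) = sqrt (2\<^sup>2 * S\<^sup>2)"
    unfolding S(2) by (simp add: field_simps power2_eq_square)
  then have xi: "\<xi>p = C1 / 2 + S"
    using S(1) by (simp add: \<xi>p_def real_sqrt_mult)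
  have "\<xi>p * (\<xi>p - C1) = C2\<^sup>2"
    unfolding xi using S(2) by (simp add: algebra_simps power2_eq_square)
  then have r: "r = C2\<^sup>2 / S"
    using assms(2) S(1) by (simp add: r_def xi power2_eq_square)
  note psi = psiJKD_integrals[OF assms(1,2), folded S_def]
  show "mu_lambdaD C1 C2 r \<xi>p 0 = C2"
    by (simp add: mu_lambdaD_def psi r)
  show "mu_lambdaD C1 C2 r \<xi>p 1 = C1 * C2 / 2 + C2\<^sup>2"
    using S(1) by (simp add: mu_lambdaD_def psi r xi field_simps power2_eq_square)
qed

lemma KD_tortuosity_closed_form:
  fixes a K0 C1 C2 \<omega> :: real
  assumes "\<omega> \<noteq> 0" and "K0 \<noteq> 0" and "C2 \<noteq> 0"
  defines "s \<equiv> - \<i> * complex_of_real \<omega>"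
  shows "\<i> * of_real (a * K0 / \<omega>) * inverse (KD K0 C1 C2 \<omega>) - \<i> * of_real (a / \<omega>)
           = of_real (a * C2) + of_real (a * C2) * (csqrt (1 + of_real C1 * s) - 1) / (of_real C2 * s)"
proof -
  define Q where "Q = csqrt (1 + of_real C1 * s)"
  have "KD K0 C1 C2 \<omega> = of_real K0 / (Q - \<i> * of_real (C2 * \<omega>))"
    by (simp add: KD_def Q_def s_def algebra_simps)
  then have "\<i> * of_real (a * K0 / \<omega>) * inverse (KD K0 C1 C2 \<omega>) - \<i> * of_real (a / \<omega>)
      = \<i> * of_real (a / \<omega>) * (Q - 1) + of_real (a * C2)"
    using assms(1,2) by (simp add: inverse_divide field_simps)
  also have "\<dots> = of_real (a * C2) + of_real (a * C2) * (Q - 1) / (of_real C2 * s)"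
    using assms(1,3) by (simp add: s_def field_simps)
  finally show ?thesis
    unfolding Q_def .
qed

theorem mainTheorem5:
  fixes \<phi> \<alpha> K0 \<eta> \<rho> \<Lambda> :: real and \<sigma> :: "real measure"
  defines "\<nu> \<equiv> \<eta> / \<rho>"
    and "F \<equiv> \<alpha> / \<phi>"
  defines "C2 \<equiv> F * K0 / \<nu>"
  defines "C1 \<equiv> 4 * C2 * F * K0 / \<Lambda>\<^sup>2"
  defines "\<xi>p \<equiv> (C1 + sqrt (C1\<^sup>2 + 4 * C2\<^sup>2)) / 2"
    and "a \<equiv> \<eta> * \<phi> / (\<rho> * K0)"
  defines "r \<equiv> 2 * C2 * sqrt (\<xi>p * (\<xi>p - C1)) / (2 * \<xi>p - C1)"
    and "T \<equiv> (\<lambda>\<omega>::real. \<i> * complex_of_real (\<eta> * \<phi> / (\<omega> * \<rho>)) * inverse (KD K0 C1 C2 \<omega>))"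
  assumes "0 < \<phi>" and "\<phi> < 1" and "0 < \<alpha>" and "0 < K0" and "0 < \<eta>" and "0 < \<rho>" and "0 < \<Lambda>"
    and "sets \<sigma> = sets borel" and "finite_measure \<sigma>"
    and "emeasure \<sigma> (- {0..\<xi>p}) = 0"
    and "\<forall>\<omega>::real. \<omega> \<noteq> 0 \<longrightarrow>
           T \<omega> = \<i> * complex_of_real (a / \<omega>)
                 + (\<integral>t. 1 / (1 - \<i> * complex_of_real (\<omega> * t)) \<partial>\<sigma>)"
  shows "(\<forall>\<omega>::real. \<omega> \<noteq> 0 \<longrightarrow>
            (let s = - \<i> * complex_of_real \<omega> in
               T \<omega> - \<i> * complex_of_real (a / \<omega>)
                 = complex_of_real \<alpha> + complex_of_real \<alpha> * (csqrt (1 + complex_of_real C1 * s) - 1)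
                                          / (complex_of_real C2 * s)
             \<and> T \<omega> - \<i> * complex_of_real (a / \<omega>)
                 = (\<integral>t. 1 / (1 + s * complex_of_real t) \<partial>\<sigma>)))
       \<and> (\<integral>t. t ^ 0 \<partial>\<sigma>) = \<alpha> + 2 * K0 * \<alpha>\<^sup>2 / (\<phi> * \<Lambda>\<^sup>2)
       \<and> (\<forall>k::nat. k \<ge> 1 \<longrightarrow>
            (\<integral>t. t ^ k \<partial>\<sigma>) = C1 ^ (k + 1) * \<alpha> / (fact (k + 1) * 2 ^ (k + 1) * C2)
                                 * (\<Prod>j=1..k. 2 * real j - 1))
       \<and> \<Lambda> = sqrt (2 * K0 * \<alpha>\<^sup>2 / (\<phi> * ((\<integral>t. t ^ 0 \<partial>\<sigma>) - \<alpha>)))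
       \<and> \<Lambda> = sqrt (2 * K0 * \<alpha> / (\<phi> * (mu_lambdaD C1 C2 r \<xi>p 1 / (mu_lambdaD C1 C2 r \<xi>p 0)\<^sup>2 - 1)))"
proof -
  have pos: "0 < \<phi>" "0 < \<alpha>" "0 < K0" "0 < \<eta>" "0 < \<rho>" "0 < \<Lambda>"
    using assms(9,11-15) by auto
  then have C: "0 < C2" "0 < C1"
    by (simp_all add: C1_def C2_def F_def \<nu>_def)
  have aC2: "a * C2 = \<alpha>"
    using pos by (simp add: a_def C2_def F_def \<nu>_def field_simps)
  have xi: "C1 \<le> \<xi>p" "0 < \<xi>p"
    using C real_sqrt_le_mono[of "C1\<^sup>2" "C1\<^sup>2 + 4 * C2\<^sup>2"] by (auto simp: \<xi>p_def)
  have closed_form: "T \<omega> - \<i> * of_real (a / \<omega>) = of_real \<alpha> + of_real \<alpha> * (csqrt (1 + of_real C1 * (- \<i> * of_real \<omega>)) - 1)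
                                                  / (of_real C2 * (- \<i> * of_real \<omega>))" if "\<omega> \<noteq> 0" for \<omega>
  proof -
    have "\<eta> * \<phi> / (\<omega> * \<rho>) = a * K0 / \<omega>"
      using pos by (simp add: a_def field_simps)
    then have "T \<omega> = \<i> * of_real (a * K0 / \<omega>) * inverse (KD K0 C1 C2 \<omega>)"
      unfolding T_def by (simp only:)
    then show ?thesis
      using KD_tortuosity_closed_form[OF that, of K0 C2 a C1] pos C unfolding aC2 by simp
  qed
  have stieltjes: "T \<omega> - \<i> * of_real (a / \<omega>) = (\<integral>t. 1 / (1 + (- \<i> * of_real \<omega>) * of_real t) \<partial>\<sigma>)"
    if "\<omega> \<noteq> 0" for \<omega>
    using assms(19) that by (simp add: mult.assoc)
  have "AE t in \<sigma>. t \<in> {0..\<xi>p}"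
    using assms(16,18) by (intro AE_I[of _ _ "- {0..\<xi>p}"]) (auto simp: sets_eq_imp_space_eq)
  then have support: "AE t in \<sigma>. \<bar>t\<bar> \<le> \<xi>p"
    by eventually_elim auto
  have moments: "(\<integral>t. t ^ k \<partial>\<sigma>) = (if k = 0 then \<alpha> else 0)
      + C1 ^ (k + 1) * \<alpha> / (fact (k + 1) * 2 ^ (k + 1) * C2) * (\<Prod>j=1..k. 2 * real j - 1)" for k
    using C xi closed_form stieltjes
    by (intro moments_of_sqrt_stieltjes_transform[OF assms(16,17) support]) auto
  have mu0: "(\<integral>t. t ^ 0 \<partial>\<sigma>) = \<alpha> + 2 * K0 * \<alpha>\<^sup>2 / (\<phi> * \<Lambda>\<^sup>2)"
    using moments[of 0] pos by (simp add: C1_def C2_def F_def \<nu>_def field_simps power2_eq_square)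
  have lambda_ratio: "mu_lambdaD C1 C2 r \<xi>p 1 / (mu_lambdaD C1 C2 r \<xi>p 0)\<^sup>2 - 1 = C1 / (2 * C2)"
    using mu_lambdaD_0_1[OF C(2,1)] C by (simp add: \<xi>p_def r_def field_simps power2_eq_square)
  have "2 * K0 * \<alpha>\<^sup>2 / (\<phi> * ((\<integral>t. t ^ 0 \<partial>\<sigma>) - \<alpha>)) = \<Lambda>\<^sup>2"
    and "2 * K0 * \<alpha> / (\<phi> * (C1 / (2 * C2))) = \<Lambda>\<^sup>2"
    using pos C unfolding mu0 by (simp_all add: C1_def F_def field_simps power2_eq_square)
  then show ?thesis
    using closed_form stieltjes moments mu0 pos lambda_ratio by (simp add: Let_def)
qed

end
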